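(* Let $G=(V,E)$ be a control flow graph and $p$ a predicate node. If $p$ has at least two successors in $A_p$, then $\{p\}$ is a trivial strongly connected component of $A_p$, and all other nodes of $A_p$ form a single strongly connected component whose induced subgraph is a cycle.
   Context: A control flow graph (CFG) is a finite directed graph $G=(V,E)$ in which every node has at most two outgoing edges; nodes with exactly two outgoing edges are predicate nodes. A path from $n_1$ is a nonempty finite or infinite sequence of nodes with each adjacent pair an edge; it is maximal if it is infinite or its last node has no successor. $V_p$ is the set of nodes occurring on all maximal paths from $p$ in $G$. For $V'\subseteq V$, a $V'$-interval from $x$ to $y$ is a finite path $n_1\ldots n_k$ in $G$ with $k\ge 2$, $n_1=x\in V'$, $n_k=y\in V'$, and $n_i\notin V'$ for $1<i<k$. $A_p$ is the directed graph with node set $V_p$ and an edge $(x,y)$ iff there is a $V_p$-interval from $x$ to $y$ in $G$. An SCC is trivial if its induced subgraph has no edge. A graph is a cycle if it is isomorphic to a graph with nodes $n_1,\ldots,n_k$ ($k>0$) and edges exactly $(n_1,n_2),\ldots,(n_{k-1},n_k),(n_k,n_1)$. *)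

theory Defs
  imports Main
begin

definition succs :: "('a \<times> 'a) set \<Rightarrow> 'a \<Rightarrow> 'a set" where
  "succs E x = {y. (x, y) \<in> E}"

definition cfg :: "'a set \<Rightarrow> ('a \<times> 'a) set \<Rightarrow> bool" where
  "cfg V E \<longleftrightarrow> finite V \<and> E \<subseteq> V \<times> V \<and> (\<forall>x\<in>V. card (succs E x) \<le> 2)"

definition predicate_node :: "'a set \<Rightarrow> ('a \<times> 'a) set \<Rightarrow> 'a \<Rightarrow> bool" where
  "predicate_node V E p \<longleftrightarrow> p \<in> V \<and> card (succs E p) = 2"

definition fpath :: "('a \<times> 'a) set \<Rightarrow> 'a list \<Rightarrow> bool" where
  "fpath E xs \<longleftrightarrow> xs \<noteq> [] \<and> (\<forall>i. Suc i < length xs \<longrightarrow> (xs ! i, xs ! Suc i) \<in> E)"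

definition ipath :: "('a \<times> 'a) set \<Rightarrow> (nat \<Rightarrow> 'a) \<Rightarrow> bool" where
  "ipath E f \<longleftrightarrow> (\<forall>i. (f i, f (Suc i)) \<in> E)"

text \<open>V_p: nodes occurring on all maximal paths from p (finite maximal paths end in a
  node without successor; infinite paths are maximal).\<close>
definition Vp :: "'a set \<Rightarrow> ('a \<times> 'a) set \<Rightarrow> 'a \<Rightarrow> 'a set" where
  "Vp V E p = {v \<in> V.
     (\<forall>xs. fpath E xs \<and> hd xs = p \<and> succs E (last xs) = {} \<longrightarrow> v \<in> set xs) \<and>
     (\<forall>f. ipath E f \<and> f 0 = p \<longrightarrow> v \<in> range f)}"

definition interval :: "('a \<times> 'a) set \<Rightarrow> 'a set \<Rightarrow> 'a \<Rightarrow> 'a \<Rightarrow> bool" where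
  "interval E V' x y \<longleftrightarrow> (\<exists>xs. fpath E xs \<and> length xs \<ge> 2 \<and> hd xs = x \<and> last xs = y \<and>
     x \<in> V' \<and> y \<in> V' \<and> (\<forall>i. 0 < i \<and> i < length xs - 1 \<longrightarrow> xs ! i \<notin> V'))"

text \<open>Edge set of A_p (its node set is Vp V E p).\<close>
definition ApE :: "'a set \<Rightarrow> ('a \<times> 'a) set \<Rightarrow> 'a \<Rightarrow> ('a \<times> 'a) set" where
  "ApE V E p = {(x, y). x \<in> Vp V E p \<and> y \<in> Vp V E p \<and> interval E (Vp V E p) x y}"

definition scc :: "'a set \<Rightarrow> ('a \<times> 'a) set \<Rightarrow> 'a set \<Rightarrow> bool" where
  "scc N R C \<longleftrightarrow> C \<subseteq> N \<and> C \<noteq> {} \<and> (\<forall>x\<in>C. \<forall>y\<in>C. (x, y) \<in> R\<^sup>*) \<and>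
     (\<forall>x\<in>C. \<forall>y\<in>N. (x, y) \<in> R\<^sup>* \<and> (y, x) \<in> R\<^sup>* \<longrightarrow> y \<in> C)"

definition induced :: "('a \<times> 'a) set \<Rightarrow> 'a set \<Rightarrow> ('a \<times> 'a) set" where
  "induced R C = R \<inter> (C \<times> C)"

definition trivial_scc :: "'a set \<Rightarrow> ('a \<times> 'a) set \<Rightarrow> 'a set \<Rightarrow> bool" where
  "trivial_scc N R C \<longleftrightarrow> scc N R C \<and> induced R C = {}"

definition is_cycle :: "'a set \<Rightarrow> ('a \<times> 'a) set \<Rightarrow> bool" where
  "is_cycle N R \<longleftrightarrow> (\<exists>xs. xs \<noteq> [] \<and> distinct xs \<and> set xs = N \<and>
     R = {(xs ! i, xs ! ((i + 1) mod length xs)) | i. i < length xs})"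

end

(*
  Let a \<noteq> b be two A_p-successors of p and write W = V_p. If a could reach p, take the last
  visit to {a, b} on such a path: together with the interval from p to that node it closes a
  cycle through p avoiding the other node, and running around this cycle forever is a maximal
  path from p missing a node of V_p. So neither a nor b reaches p.

  Every maximal path from a (or b) contains W - {p}, and this property passes along edges: if the
  current node u lies in W - {p}, one of a, b differs from u and must still be met later, and
  everything unavoidable from it is unavoidable there. Hence all of W - {p} is unavoidable from
  each of its nodes, so W - {p} is strongly connected in A_p and cannot reach p. Two distinct
  A_p-successors of a node of W - {p} would again give a cycle avoiding one of them, so every
  node has exactly one successor, and a strongly connected graph of this kind is a cycle.
*)
theory Submission
  imports Defs "HOL-Combinatorics.Orbits"
begin

lemma fpath_singleton [simp]: "fpath E [x]"
  by (simp add: fpath_def)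

lemma fpath_Cons_Cons [simp]: "fpath E (x # y # ys) \<longleftrightarrow> (x, y) \<in> E \<and> fpath E (y # ys)"
  unfolding fpath_def by (auto simp: less_Suc_eq_0_disj)

lemma fpath_Cons: "fpath E (x # xs) \<longleftrightarrow> xs = [] \<or> (x, hd xs) \<in> E \<and> fpath E xs"
  by (cases xs) auto

lemma fpath_snoc: "fpath E (xs @ [y]) \<longleftrightarrow> xs = [] \<or> fpath E xs \<and> (last xs, y) \<in> E"
  by (induction xs) (auto simp: fpath_Cons)

lemma fpath_mono: "fpath F xs \<Longrightarrow> F \<subseteq> E \<Longrightarrow> fpath E xs"
  unfolding fpath_def by blast

lemma fpath_restrict_targets:
  "fpath E xs \<Longrightarrow> set (tl xs) \<subseteq> C \<Longrightarrow> fpath (E \<inter> UNIV \<times> C) xs"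
proof (induction xs)
  case (Cons x xs)
  then show ?case by (cases xs) (auto simp: fpath_Cons)
qed (simp add: fpath_def)

lemma fpath_drop: "fpath E xs \<Longrightarrow> j < length xs \<Longrightarrow> fpath E (drop j xs)"
  by (induction xs arbitrary: j) (auto simp: fpath_Cons drop_Cons' hd_drop_conv_nth)

lemma fpath_reachable: "fpath E xs \<Longrightarrow> v \<in> set xs \<Longrightarrow> (hd xs, v) \<in> E\<^sup>*"
  by (induction xs) (auto simp: fpath_Cons intro: converse_rtrancl_into_rtrancl)

lemma rtrancl_fpath:
  assumes "(a, c) \<in> E\<^sup>*"
  obtains xs where "fpath E xs" "hd xs = a" "last xs = c" "set (tl xs) \<subseteq> Range E"
  using assms
proof (induction arbitrary: thesis rule: converse_rtrancl_induct)
  case base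
  then show ?case by (metis fpath_singleton last_ConsL list.sel(1,3) empty_set empty_subsetI)
next
  case (step y z)
  show ?case
  proof (rule step.IH)
    fix xs assume "fpath E xs" "hd xs = z" "last xs = c" "set (tl xs) \<subseteq> Range E"
    moreover have "xs \<noteq> []" using \<open>fpath E xs\<close> by (simp add: fpath_def)
    moreover then have "set xs = insert (hd xs) (set (tl xs))" by (cases xs) auto
    ultimately show thesis
      using step.hyps(1) by (intro step.prems[of "y # xs"]) (auto simp: fpath_Cons)
  qed
qed

definition interval_graph :: "('a \<times> 'a) set \<Rightarrow> 'a set \<Rightarrow> ('a \<times> 'a) set" where
  "interval_graph E W = {(x, y). interval E W x y}"

lemma ApE_eq_interval_graph: "ApE V E p = interval_graph E (Vp V E p)"
  unfolding ApE_def interval_graph_def interval_def by blast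

lemma set_tl_butlast_conv_nth:
  "set (tl (butlast xs)) = {xs ! i | i. 0 < i \<and> i < length xs - 1}"
proof (intro set_eqI iffI)
  fix v assume "v \<in> set (tl (butlast xs))"
  then obtain j where "j < length xs - 2" "v = xs ! Suc j"
    by (auto simp: in_set_conv_nth nth_tl nth_butlast numeral_2_eq_2)
  then show "v \<in> {xs ! i | i. 0 < i \<and> i < length xs - 1}" by (intro CollectI exI[of _ "Suc j"]) auto
next
  fix v assume "v \<in> {xs ! i | i. 0 < i \<and> i < length xs - 1}"
  then obtain i where "0 < i" "i < length xs - 1" "v = xs ! i" by blast
  then show "v \<in> set (tl (butlast xs))"
    by (auto simp: in_set_conv_nth nth_tl nth_butlast intro!: exI[of _ "i - 1"])
qed

lemma interval_graph_iff:
  "(x, y) \<in> interval_graph E W \<longleftrightarrow> x \<in> W \<and> y \<in> W \<and> (x, y) \<in> (E \<inter> UNIV \<times> -W)\<^sup>* O E"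
proof
  assume "(x, y) \<in> interval_graph E W"
  then obtain xs where xs: "fpath E xs" "length xs \<ge> 2" "hd xs = x" "last xs = y" "x \<in> W" "y \<in> W"
    and inner: "\<forall>i. 0 < i \<and> i < length xs - 1 \<longrightarrow> xs ! i \<notin> W"
    unfolding interval_graph_def interval_def by blast
  define ys where "ys = butlast xs"
  have ys: "ys \<noteq> []" using xs(2) by (simp add: ys_def flip: length_greater_0_conv)
  have xs_eq: "xs = ys @ [y]" using ys xs(4) unfolding ys_def by (metis append_butlast_last_id butlast.simps(1))
  then have "hd ys = x" using xs(3) ys by simp
  have "fpath E ys" "(last ys, y) \<in> E" using xs(1) ys(1) unfolding xs_eq fpath_snoc by auto
  moreover have "set (tl ys) \<subseteq> -W" using inner by (auto simp: ys_def set_tl_butlast_conv_nth)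
  ultimately have "(x, last ys) \<in> (E \<inter> UNIV \<times> -W)\<^sup>*"
    using fpath_reachable[OF fpath_restrict_targets, of E ys "-W" "last ys"] ys \<open>hd ys = x\<close> by simp
  then show "x \<in> W \<and> y \<in> W \<and> (x, y) \<in> (E \<inter> UNIV \<times> -W)\<^sup>* O E"
    using \<open>(last ys, y) \<in> E\<close> xs(5,6) by blast
next
  assume "x \<in> W \<and> y \<in> W \<and> (x, y) \<in> (E \<inter> UNIV \<times> -W)\<^sup>* O E"
  then obtain c where W: "x \<in> W" "y \<in> W" and xc: "(x, c) \<in> (E \<inter> UNIV \<times> -W)\<^sup>*" and cy: "(c, y) \<in> E"
    by blast
  obtain ys where ys: "fpath (E \<inter> UNIV \<times> -W) ys" "hd ys = x" "last ys = c"
    and "set (tl ys) \<subseteq> Range (E \<inter> UNIV \<times> -W)"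
    using rtrancl_fpath[OF xc] .
  then have "set (tl ys) \<subseteq> -W" by blast
  have "ys \<noteq> []" using ys(1) by (simp add: fpath_def)
  then have "fpath E (ys @ [y])" "length (ys @ [y]) \<ge> 2" "hd (ys @ [y]) = x"
    using ys cy fpath_mono[OF ys(1)] by (auto simp: fpath_snoc Suc_le_eq)
  moreover have "\<forall>i. 0 < i \<and> i < length (ys @ [y]) - 1 \<longrightarrow> (ys @ [y]) ! i \<notin> W"
    using \<open>set (tl ys) \<subseteq> -W\<close> set_tl_butlast_conv_nth[of "ys @ [y]"] by auto
  ultimately show "(x, y) \<in> interval_graph E W"
    unfolding interval_graph_def interval_def using W by (intro CollectI case_prodI exI[of _ "ys @ [y]"]) auto
qed

(* Maximal paths, finite or infinite, are only ever needed through their node sets. *)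
definition maximal_path_nodes :: "('a \<times> 'a) set \<Rightarrow> 'a \<Rightarrow> 'a set \<Rightarrow> bool" where
  "maximal_path_nodes E u S \<longleftrightarrow>
     (\<exists>xs. fpath E xs \<and> hd xs = u \<and> succs E (last xs) = {} \<and> set xs = S) \<or>
     (\<exists>f. ipath E f \<and> f 0 = u \<and> range f = S)"

definition unavoidable :: "('a \<times> 'a) set \<Rightarrow> 'a \<Rightarrow> 'a set" where
  "unavoidable E u = {v. \<forall>S. maximal_path_nodes E u S \<longrightarrow> v \<in> S}"

lemma Vp_eq_unavoidable: "Vp V E p = V \<inter> unavoidable E p"
  unfolding Vp_def unavoidable_def maximal_path_nodes_def by blast

lemma ipath_exists:
  assumes "u \<in> X" and succ: "\<And>v. v \<in> X \<Longrightarrow> \<exists>w\<in>X. (v, w) \<in> E"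
  obtains f where "ipath E f" "f 0 = u" "range f \<subseteq> X"
proof -
  define f where "f = rec_nat u (\<lambda>_ v. SOME w. w \<in> X \<and> (v, w) \<in> E)"
  have f_Suc: "f (Suc n) = (SOME w. w \<in> X \<and> (f n, w) \<in> E)" for n by (simp add: f_def)
  have ex: "\<exists>w. w \<in> X \<and> (v, w) \<in> E" if "v \<in> X" for v using succ[OF that] by blast
  have X: "f n \<in> X" for n
  proof (induction n)
    case (Suc n)
    show ?case unfolding f_Suc using someI_ex[OF ex[OF Suc]] by blast
  qed (simp add: f_def assms(1))
  have "(f n, f (Suc n)) \<in> E" for n
    unfolding f_Suc using someI_ex[OF ex[OF X[of n]]] by blast
  moreover have "f 0 = u" by (simp add: f_def)
  ultimately show thesis using X that[of f] by (auto simp: ipath_def)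
qed

lemma ipath_reachable: "ipath E f \<Longrightarrow> (f 0, f j) \<in> E\<^sup>*"
  by (induction j) (auto simp: ipath_def intro: rtrancl_into_rtrancl)

lemma maximal_path_nodes_exists: "\<exists>S. maximal_path_nodes E u S"
proof (cases "\<exists>c. (u, c) \<in> E\<^sup>* \<and> succs E c = {}")
  case True
  then obtain c where c: "(u, c) \<in> E\<^sup>*" "succs E c = {}" by blast
  then obtain xs where "fpath E xs" "hd xs = u" "last xs = c"
    using rtrancl_fpath[OF c(1)] by blast
  then show ?thesis using c(2) unfolding maximal_path_nodes_def by blast
next
  case False
  have "\<exists>w\<in>{v. (u, v) \<in> E\<^sup>*}. (v, w) \<in> E" if "v \<in> {v. (u, v) \<in> E\<^sup>*}" for v
    using False that by (auto simp: succs_def intro: rtrancl_into_rtrancl)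
  then obtain f where "ipath E f" "f 0 = u" "range f \<subseteq> {v. (u, v) \<in> E\<^sup>*}"
    by (rule ipath_exists[of u, rotated]) auto
  then show ?thesis unfolding maximal_path_nodes_def by blast
qed

lemma maximal_path_nodes_start: "maximal_path_nodes E u S \<Longrightarrow> u \<in> S"
  unfolding maximal_path_nodes_def fpath_def by (metis hd_in_set rangeI)

lemma maximal_path_nodes_reachable:
  assumes "maximal_path_nodes E u S" "w \<in> S"
  shows "(u, w) \<in> E\<^sup>*"
  using assms(1) unfolding maximal_path_nodes_def
proof (elim disjE exE conjE)
  fix xs assume "fpath E xs" "hd xs = u" "set xs = S"
  then show ?thesis using fpath_reachable[of E xs w] assms(2) by simp
next
  fix f assume "ipath E f" "f 0 = u" "range f = S"
  then show ?thesis using ipath_reachable[of E f] assms(2) by auto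
qed

lemma maximal_path_nodes_Cons:
  assumes "(u, v) \<in> E" "maximal_path_nodes E v S"
  shows "maximal_path_nodes E u (insert u S)"
  using assms(2)[unfolded maximal_path_nodes_def]
proof (elim disjE exE conjE)
  fix xs assume "fpath E xs" "hd xs = v" "succs E (last xs) = {}" "set xs = S"
  moreover then have "xs \<noteq> []" by (simp add: fpath_def)
  ultimately show ?thesis using assms(1) unfolding maximal_path_nodes_def
    by (intro disjI1 exI[of _ "u # xs"]) (simp add: fpath_Cons)
next
  fix f assume "ipath E f" "f 0 = v" "range f = S"
  moreover have "range (case_nat u f) = insert u (range f)"
  proof (intro equalityI subsetI)
    fix w assume "w \<in> insert u (range f)"
    then consider "w = u" | i where "w = f i" by blast
    then show "w \<in> range (case_nat u f)"
      by cases (metis nat.case(1) rangeI, metis nat.case(2) rangeI)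
  qed (auto split: nat.splits)
  ultimately show ?thesis using assms(1) unfolding maximal_path_nodes_def
    by (intro disjI2 exI[of _ "case_nat u f"]) (auto simp: ipath_def split: nat.split)
qed

lemma maximal_path_nodes_suffix:
  assumes "maximal_path_nodes E v S" "w \<in> S"
  obtains S' where "S' \<subseteq> S" "maximal_path_nodes E w S'"
  using assms(1) unfolding maximal_path_nodes_def
proof (elim disjE exE conjE)
  fix xs assume xs: "fpath E xs" "hd xs = v" "succs E (last xs) = {}" "set xs = S"
  then obtain j where j: "j < length xs" "xs ! j = w" using assms(2) by (metis in_set_conv_nth)
  then have "fpath E (drop j xs)" "hd (drop j xs) = w" "last (drop j xs) = last xs"
    using fpath_drop[OF xs(1)] by (auto simp: hd_drop_conv_nth)
  then show thesis using that[of "set (drop j xs)"] xs(3,4) set_drop_subset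
    unfolding maximal_path_nodes_def by metis
next
  fix f assume f: "ipath E f" "f 0 = v" "range f = S"
  then obtain j where "f j = w" using assms(2) by auto
  moreover have "ipath E (\<lambda>i. f (i + j))" using f(1) by (simp add: ipath_def)
  ultimately have "maximal_path_nodes E w (range (\<lambda>i. f (i + j)))"
    unfolding maximal_path_nodes_def by (intro disjI2 exI[of _ "\<lambda>i. f (i + j)"]) simp
  moreover have "range (\<lambda>i. f (i + j)) \<subseteq> S" using f(3) by auto
  ultimately show thesis using that by blast
qed

lemma maximal_path_nodes_cycle:
  assumes "(u, u) \<in> (E \<inter> UNIV \<times> C)\<^sup>+"
  obtains S where "S \<subseteq> C" "maximal_path_nodes E u S"
proof -
  let ?F = "E \<inter> UNIV \<times> C"
  have succ: "\<exists>w\<in>{v. (v, u) \<in> ?F\<^sup>+}. (v, w) \<in> ?F" if "(v, u) \<in> ?F\<^sup>+" for v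
  proof (rule converse_tranclE[OF that])
    assume "(v, u) \<in> ?F"
    then show ?thesis using assms by blast
  next
    fix w assume "(v, w) \<in> ?F" "(w, u) \<in> ?F\<^sup>+"
    then show ?thesis by blast
  qed
  obtain f where f: "ipath ?F f" "f 0 = u"
    by (rule ipath_exists[of u "{v. (v, u) \<in> ?F\<^sup>+}" ?F]) (use assms succ in simp_all)
  have "u \<in> C" using assms by (cases rule: tranclE) auto
  then have "f i \<in> C" for i using f by (cases i) (auto simp: ipath_def)
  moreover have "ipath E f" using f(1) by (simp add: ipath_def)
  ultimately show thesis using that[of "range f"] f(2) unfolding maximal_path_nodes_def by blast
qed

lemma unavoidable_start: "u \<in> unavoidable E u"
  by (simp add: unavoidable_def maximal_path_nodes_start)

lemma unavoidable_reachable: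
  assumes "v \<in> unavoidable E u"
  shows "(u, v) \<in> E\<^sup>*"
proof -
  obtain S where S: "maximal_path_nodes E u S" using maximal_path_nodes_exists[of E u] by (elim exE)
  then have "v \<in> S" using assms unfolding unavoidable_def by blast
  with S show ?thesis by (rule maximal_path_nodes_reachable)
qed

lemma unavoidable_Cons:
  assumes "(u, v) \<in> E"
  shows "unavoidable E u \<subseteq> insert u (unavoidable E v)"
proof
  fix x assume x: "x \<in> unavoidable E u"
  have "x \<in> insert u S" if "maximal_path_nodes E v S" for S
    using x maximal_path_nodes_Cons[OF assms that] unfolding unavoidable_def by blast
  then show "x \<in> insert u (unavoidable E v)" by (auto simp: unavoidable_def)
qed

lemma unavoidable_trans: "w \<in> unavoidable E v \<Longrightarrow> unavoidable E w \<subseteq> unavoidable E v"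
proof
  fix x assume x: "x \<in> unavoidable E w" and w: "w \<in> unavoidable E v"
  show "x \<in> unavoidable E v" unfolding unavoidable_def
  proof (intro CollectI allI impI)
    fix S assume S: "maximal_path_nodes E v S"
    then have "w \<in> S" using w unfolding unavoidable_def by blast
    with S obtain S' where "S' \<subseteq> S" "maximal_path_nodes E w S'"
      by (rule maximal_path_nodes_suffix)
    then show "x \<in> S" using x unfolding unavoidable_def by blast
  qed
qed

lemma unavoidable_rtrancl_targets:
  "(x, y) \<in> (E \<inter> UNIV \<times> C)\<^sup>* \<Longrightarrow> unavoidable E x \<subseteq> insert x (C \<union> unavoidable E y)"
proof (induction rule: converse_rtrancl_induct)
  case (step x z)
  then have "(x, z) \<in> E" "z \<in> C" by auto
  then show ?case using unavoidable_Cons[of x z E] step.IH by auto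
qed auto

lemma not_unavoidable_if_cycle_avoiding:
  "(u, u) \<in> (E \<inter> UNIV \<times> -{b})\<^sup>+ \<Longrightarrow> b \<notin> unavoidable E u"
proof -
  assume "(u, u) \<in> (E \<inter> UNIV \<times> -{b})\<^sup>+"
  then obtain S where "S \<subseteq> -{b}" "maximal_path_nodes E u S" by (rule maximal_path_nodes_cycle)
  then show "b \<notin> unavoidable E u" unfolding unavoidable_def by blast
qed

lemma interval_graph_subset_trancl: "interval_graph E W \<subseteq> E\<^sup>+"
proof clarify
  fix x y assume "(x, y) \<in> interval_graph E W"
  then obtain c where "(x, c) \<in> (E \<inter> UNIV \<times> -W)\<^sup>*" "(c, y) \<in> E"
    by (auto simp: interval_graph_iff)
  moreover have "(E \<inter> UNIV \<times> -W)\<^sup>* \<subseteq> E\<^sup>*" by (rule rtrancl_mono) blast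
  ultimately show "(x, y) \<in> E\<^sup>+" by (blast intro: rtrancl_into_trancl1)
qed

lemma rtrancl_interval_graph_subset: "(interval_graph E W)\<^sup>* \<subseteq> E\<^sup>*"
  using rtrancl_mono[OF interval_graph_subset_trancl] by (simp add: trancl_rtrancl_absorb)

lemma rtrancl_interval_graph:
  assumes "x \<in> W" "y \<in> W" "(x, y) \<in> E\<^sup>*"
  shows "(x, y) \<in> (interval_graph E W)\<^sup>*"
proof -
  let ?S = "E \<inter> UNIV \<times> -W"
  have "\<exists>w\<in>W. (x, w) \<in> (interval_graph E W)\<^sup>* \<and> (w, c) \<in> ?S\<^sup>*" if "(x, c) \<in> E\<^sup>*" for c
    using that
  proof (induction rule: rtrancl_induct)
    case base
    then show ?case using assms(1) by blast
  next
    case (step c d)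
    then obtain w where w: "w \<in> W" "(x, w) \<in> (interval_graph E W)\<^sup>*" "(w, c) \<in> ?S\<^sup>*" by blast
    show ?case
    proof (cases "d \<in> W")
      case True
      then have "(w, d) \<in> interval_graph E W" using w step.hyps(2) by (auto simp: interval_graph_iff)
      with w(2) have "(x, d) \<in> (interval_graph E W)\<^sup>*" by (rule rtrancl_into_rtrancl)
      then show ?thesis using True by (intro bexI[of _ d]) auto
    next
      case False
      then have "(c, d) \<in> ?S" using step.hyps(2) by simp
      with w(3) have "(w, d) \<in> ?S\<^sup>*" by (rule rtrancl_into_rtrancl)
      then show ?thesis using w(1,2) by blast
    qed
  qed
  then obtain w where "(x, w) \<in> (interval_graph E W)\<^sup>*" "(w, y) \<in> ?S\<^sup>*" using assms(3) by blast
  moreover from \<open>(w, y) \<in> ?S\<^sup>*\<close> have "w = y" using assms(2) by (cases rule: rtranclE) auto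
  ultimately show ?thesis by simp
qed

lemma interval_graph_avoiding:
  assumes "(x, y) \<in> interval_graph E W" "b \<in> W" "b \<noteq> y"
  shows "(x, y) \<in> (E \<inter> UNIV \<times> -{b})\<^sup>+"
proof -
  obtain c where "(x, c) \<in> (E \<inter> UNIV \<times> -W)\<^sup>*" "(c, y) \<in> E"
    using assms(1) by (auto simp: interval_graph_iff)
  moreover have "(E \<inter> UNIV \<times> -W)\<^sup>* \<subseteq> (E \<inter> UNIV \<times> -{b})\<^sup>*"
    using assms(2) by (intro rtrancl_mono) blast
  moreover have "(c, y) \<in> E \<Longrightarrow> (c, y) \<in> E \<inter> UNIV \<times> -{b}" using assms(3) by simp
  ultimately show ?thesis by (blast intro: rtrancl_into_trancl1)
qed

lemma unavoidable_interval_graph: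
  assumes "(x, y) \<in> interval_graph E W"
  shows "W \<inter> unavoidable E x \<subseteq> insert x (unavoidable E y)"
proof -
  let ?C = "insert y (-W)"
  obtain c where "(x, c) \<in> (E \<inter> UNIV \<times> -W)\<^sup>*" "(c, y) \<in> E"
    using assms by (auto simp: interval_graph_iff)
  moreover have "(E \<inter> UNIV \<times> -W)\<^sup>* \<subseteq> (E \<inter> UNIV \<times> ?C)\<^sup>*" by (rule rtrancl_mono) blast
  moreover have "(c, y) \<in> E \<Longrightarrow> (c, y) \<in> E \<inter> UNIV \<times> ?C" by simp
  ultimately have "(x, y) \<in> (E \<inter> UNIV \<times> ?C)\<^sup>*" by (blast intro: rtrancl_into_rtrancl)
  then have "unavoidable E x \<subseteq> insert x (?C \<union> unavoidable E y)" by (rule unavoidable_rtrancl_targets)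
  then show ?thesis using unavoidable_start[of y E] by blast
qed

lemma rtrancl_last_visit:
  assumes "(a, c) \<in> E\<^sup>*" "a \<in> B"
  obtains d where "d \<in> B" "(d, c) \<in> (E \<inter> UNIV \<times> -B)\<^sup>*"
  using assms
proof (induction arbitrary: thesis rule: rtrancl_induct)
  case base
  then show ?case by blast
next
  case (step c e)
  show ?case
  proof (cases "e \<in> B")
    case False
    show thesis
    proof (rule step.IH[OF _ step.prems(2)])
      fix d assume d: "d \<in> B" "(d, c) \<in> (E \<inter> UNIV \<times> -B)\<^sup>*"
      have "(c, e) \<in> E \<inter> UNIV \<times> -B" using False step.hyps(2) by simp
      with d(2) have "(d, e) \<in> (E \<inter> UNIV \<times> -B)\<^sup>*" by (rule rtrancl_into_rtrancl)
      with d(1) show thesis by (rule step.prems(1))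
    qed
  next
    case True
    show thesis by (rule step.prems(1)[OF True rtrancl_refl])
  qed
qed

lemma interval_graph_return_avoiding:
  assumes "(x, d) \<in> interval_graph E W" "d' \<in> W" "d' \<noteq> d" "(d, x) \<in> (E \<inter> UNIV \<times> -{d'})\<^sup>*"
  shows "d' \<notin> unavoidable E x"
proof -
  have "(x, d) \<in> (E \<inter> UNIV \<times> -{d'})\<^sup>+" using interval_graph_avoiding[OF assms(1-3)] .
  then have "(x, x) \<in> (E \<inter> UNIV \<times> -{d'})\<^sup>+" using assms(4) by (rule trancl_rtrancl_trancl)
  then show ?thesis by (rule not_unavoidable_if_cycle_avoiding)
qed

(* Otherwise the last visit to {a, b} on a path from a back to x closes a cycle through x that
   avoids the other of the two nodes. *)
lemma interval_graph_fork_not_reaches: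
  assumes "(x, a) \<in> interval_graph E W" "(x, b) \<in> interval_graph E W" "a \<noteq> b"
    and "a \<in> unavoidable E x" "b \<in> unavoidable E x"
  shows "(a, x) \<notin> E\<^sup>*"
proof
  have W: "a \<in> W" "b \<in> W" using assms(1,2) by (auto simp: interval_graph_iff)
  have mono: "(E \<inter> UNIV \<times> -{a, b})\<^sup>* \<subseteq> (E \<inter> UNIV \<times> -{d'})\<^sup>*" if "d' \<in> {a, b}" for d'
    using that by (intro rtrancl_mono) blast
  assume "(a, x) \<in> E\<^sup>*"
  moreover have "a \<in> {a, b}" by simp
  ultimately obtain d where "d \<in> {a, b}" "(d, x) \<in> (E \<inter> UNIV \<times> -{a, b})\<^sup>*"
    by (rule rtrancl_last_visit)
  then consider "(a, x) \<in> (E \<inter> UNIV \<times> -{b})\<^sup>*" | "(b, x) \<in> (E \<inter> UNIV \<times> -{a})\<^sup>*"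
    using mono by blast
  then show False
  proof cases
    case 1
    then show False using interval_graph_return_avoiding[OF assms(1) W(2)] assms(3,5) by simp
  next
    case 2
    then show False using interval_graph_return_avoiding[OF assms(2) W(1)] assms(3,4) by simp
  qed
qed

lemma is_cycle_orbit:
  assumes "x \<in> orbit f x"
  shows "is_cycle (orbit f x) {(y, f y) | y. y \<in> orbit f x}"
proof -
  define m where "m = funpow_dist1 f x x"
  define xs where "xs = map (\<lambda>n. (f ^^ n) x) [0..<m]"
  have period: "(f ^^ m) x = x" unfolding m_def by (rule funpow_dist1_prop[OF assms])
  have len: "length xs = m" and "xs \<noteq> []" by (simp_all add: xs_def m_def)
  have nth: "xs ! i = (f ^^ i) x" if "i < m" for i using that by (simp add: xs_def)
  have "inj_on (\<lambda>n. (f ^^ n) x) {0..<m}" unfolding m_def by (rule inj_on_funpow_dist1[OF assms])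
  then have "distinct xs" by (simp add: xs_def distinct_map)
  have "orbit f x = (\<lambda>n. (f ^^ n) x) ` {0..<m}" unfolding m_def by (rule orbit_conv_funpow_dist1[OF assms])
  then have set_xs: "set xs = orbit f x" by (simp add: xs_def)
  have "xs ! ((i + 1) mod m) = f (xs ! i)" if "i < m" for i
  proof (cases "Suc i < m")
    case True
    then show ?thesis using that by (simp add: nth)
  next
    case False
    then have "Suc i = m" using that by simp
    then show ?thesis using period nth[OF that] nth[of 0] by auto
  qed
  then have "{(y, f y) | y. y \<in> orbit f x} = {(xs ! i, xs ! ((i + 1) mod length xs)) | i. i < length xs}"
    unfolding len set_xs[symmetric] by (auto simp: in_set_conv_nth len)
  then show ?thesis unfolding is_cycle_def using \<open>xs \<noteq> []\<close> \<open>distinct xs\<close> set_xs by blast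
qed

lemma is_cycle_if_functional_strongly_connected:
  assumes "x \<in> N"
    and unique: "\<And>u. u \<in> N \<Longrightarrow> \<exists>!v. (u, v) \<in> R"
    and closed: "\<And>u v. u \<in> N \<Longrightarrow> (u, v) \<in> R \<Longrightarrow> v \<in> N"
    and connected: "\<And>u v. u \<in> N \<Longrightarrow> v \<in> N \<Longrightarrow> (u, v) \<in> R\<^sup>*"
  shows "is_cycle N (induced R N)"
proof -
  define s where "s u = (THE v. (u, v) \<in> R)" for u
  have s: "(u, v) \<in> R \<longleftrightarrow> v = s u" if "u \<in> N" for u v
    unfolding s_def using theI'[OF unique[OF that]] the1_equality[OF unique[OF that]] by blast
  then have s_in: "s u \<in> N" if "u \<in> N" for u using closed that by blast
  have "orbit s x \<subseteq> N"
  proof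
    fix y assume "y \<in> orbit s x"
    then show "y \<in> N" by induction (use assms(1) s_in in auto)
  qed
  moreover have "N \<subseteq> orbit s x"
  proof
    fix w assume "w \<in> N"
    then have "(s x, w) \<in> R\<^sup>*" using connected s_in assms(1) by blast
    then show "w \<in> orbit s x"
    proof (induction rule: rtrancl_induct)
      case (step c d)
      then have "d = s c" using s \<open>orbit s x \<subseteq> N\<close> by blast
      then show ?case using step.IH by (simp add: orbit.step)
    qed (rule orbit.base)
  qed
  ultimately have N: "N = orbit s x" by blast
  have "induced R N = {(y, s y) | y. y \<in> orbit s x}"
    unfolding induced_def N[symmetric] using s s_in by auto
  then show ?thesis using N is_cycle_orbit[of x s] assms(1) by simp
qed

(* Of V_p, only the inclusion W \<subseteq> unavoidable E p is used. *)
locale interval_fork =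
  fixes E :: "('a \<times> 'a) set" and W :: "'a set" and p a b :: 'a
  assumes W_unavoidable: "W \<subseteq> unavoidable E p"
    and fork_a: "(p, a) \<in> interval_graph E W"
    and fork_b: "(p, b) \<in> interval_graph E W"
    and a_neq_b: "a \<noteq> b"
begin

lemma fork_in_W: "p \<in> W" "a \<in> W" "b \<in> W"
  using fork_a fork_b by (auto simp: interval_graph_iff)

lemma fork_not_reaches_p: "(a, p) \<notin> E\<^sup>*" "(b, p) \<notin> E\<^sup>*"
  using interval_graph_fork_not_reaches[OF fork_a fork_b a_neq_b]
    interval_graph_fork_not_reaches[OF fork_b fork_a a_neq_b[symmetric]]
    fork_in_W W_unavoidable by auto

lemma fork_in_rest: "a \<in> W - {p}" "b \<in> W - {p}"
  using fork_in_W fork_not_reaches_p by auto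

lemma no_loop_at_p: "(p, p) \<notin> interval_graph E W"
proof
  assume "(p, p) \<in> interval_graph E W"
  from interval_graph_fork_not_reaches[OF this fork_a] show False
    using fork_in_rest fork_in_W W_unavoidable by auto
qed

lemma rest_unavoidable_from_fork: "W - {p} \<subseteq> unavoidable E a" "W - {p} \<subseteq> unavoidable E b"
  using unavoidable_interval_graph[OF fork_a] unavoidable_interval_graph[OF fork_b] W_unavoidable
  by blast+

lemma rest_unavoidable_step:
  assumes "W - {p} \<subseteq> unavoidable E u" "(u, v) \<in> E"
  shows "W - {p} \<subseteq> unavoidable E v"
proof -
  have u: "W - {p} \<subseteq> insert u (unavoidable E v)" using assms(1) unavoidable_Cons[OF assms(2)] by blast
  show ?thesis
  proof (cases "u \<in> W - {p}")
    case False
    then show ?thesis using u by blast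
  next
    case True
    obtain c where c: "c \<in> {a, b}" "c \<noteq> u" using a_neq_b by blast
    then have "c \<in> unavoidable E v" using u fork_in_rest by blast
    then have "unavoidable E c \<subseteq> unavoidable E v" by (rule unavoidable_trans)
    moreover have "W - {p} \<subseteq> unavoidable E c" using c(1) rest_unavoidable_from_fork by blast
    ultimately show ?thesis by blast
  qed
qed

lemma rest_reachable_from_fork: "x \<in> W - {p} \<Longrightarrow> (a, x) \<in> E\<^sup>*"
  using rest_unavoidable_from_fork(1) by (intro unavoidable_reachable) blast

lemma rest_unavoidable:
  assumes "x \<in> W - {p}"
  shows "W - {p} \<subseteq> unavoidable E x"
  using rest_reachable_from_fork[OF assms]
proof (induction rule: rtrancl_induct)
  case base
  show ?case by (rule rest_unavoidable_from_fork(1))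
next
  case (step u v)
  from step.IH step.hyps(2) show ?case by (rule rest_unavoidable_step)
qed

lemma rest_not_reaches_p:
  assumes "x \<in> W - {p}"
  shows "(x, p) \<notin> E\<^sup>*"
proof
  assume "(x, p) \<in> E\<^sup>*"
  moreover have "(a, x) \<in> E\<^sup>*" using assms by (rule rest_reachable_from_fork)
  ultimately show False using fork_not_reaches_p(1) by (meson rtrancl_trans)
qed

lemma rest_strongly_connected:
  assumes "x \<in> W - {p}" "y \<in> W - {p}"
  shows "(x, y) \<in> (interval_graph E W)\<^sup>*"
proof -
  have "y \<in> unavoidable E x" using rest_unavoidable[OF assms(1)] assms(2) by blast
  then have "(x, y) \<in> E\<^sup>*" by (rule unavoidable_reachable)
  then show ?thesis using assms by (intro rtrancl_interval_graph) auto
qed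

lemma rest_successor_in_rest:
  assumes "x \<in> W - {p}" "(x, y) \<in> interval_graph E W"
  shows "y \<in> W - {p}"
proof -
  have "y \<in> W" using assms(2) by (simp add: interval_graph_iff)
  moreover have "(x, y) \<in> E\<^sup>*" using assms(2) interval_graph_subset_trancl by fastforce
  ultimately show ?thesis using rest_not_reaches_p[OF assms(1)] by auto
qed

lemma rest_successor_exists:
  assumes x: "x \<in> W - {p}"
  obtains y where "(x, y) \<in> interval_graph E W"
proof -
  obtain c where c: "c \<in> {a, b}" "c \<noteq> x" using a_neq_b by blast
  then have "c \<in> W - {p}" using fork_in_rest by blast
  with x have "(x, c) \<in> (interval_graph E W)\<^sup>*" by (rule rest_strongly_connected)
  then show thesis using c(2) that by (cases rule: converse_rtranclE) auto
qed

lemma rest_successor_unique: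
  assumes x: "x \<in> W - {p}" and y: "(x, y) \<in> interval_graph E W" and z: "(x, z) \<in> interval_graph E W"
  shows "y = z"
proof (rule ccontr)
  assume "y \<noteq> z"
  have yz: "y \<in> W - {p}" "z \<in> W - {p}"
    using rest_successor_in_rest[OF x y] rest_successor_in_rest[OF x z] .
  then have "(y, x) \<in> E\<^sup>*"
    using rest_strongly_connected[OF yz(1) x] rtrancl_interval_graph_subset by blast
  moreover have "y \<in> unavoidable E x" "z \<in> unavoidable E x" using yz rest_unavoidable[OF x] by blast+
  ultimately show False using interval_graph_fork_not_reaches[OF y z \<open>y \<noteq> z\<close>] by simp
qed

lemma rest_not_reaches_p_in_interval_graph:
  assumes "x \<in> W - {p}"
  shows "(x, p) \<notin> (interval_graph E W)\<^sup>*"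
  using rest_not_reaches_p[OF assms] rtrancl_interval_graph_subset[of E W] by blast

lemma trivial_scc_p: "trivial_scc W (interval_graph E W) {p}"
proof -
  have "y = p" if "y \<in> W" "(y, p) \<in> (interval_graph E W)\<^sup>*" for y
    using that rest_not_reaches_p_in_interval_graph by blast
  then show ?thesis
    using fork_in_W(1) no_loop_at_p unfolding trivial_scc_def scc_def induced_def by auto
qed

lemma scc_rest: "scc W (interval_graph E W) (W - {p})"
  unfolding scc_def
  using fork_in_rest rest_strongly_connected rest_not_reaches_p_in_interval_graph by blast

lemma is_cycle_rest: "is_cycle (W - {p}) (induced (interval_graph E W) (W - {p}))"
proof (rule is_cycle_if_functional_strongly_connected)
  fix x assume x: "x \<in> W - {p}"
  then obtain y where y: "(x, y) \<in> interval_graph E W" by (rule rest_successor_exists)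
  show "\<exists>!y. (x, y) \<in> interval_graph E W" using y rest_successor_unique[OF x y] by blast
qed (fact fork_in_rest(1) rest_successor_in_rest rest_strongly_connected)+

end

theorem lemma4p8:
  fixes V :: "'a set" and E :: "('a \<times> 'a) set" and p :: 'a
  assumes "cfg V E"
    and "predicate_node V E p"
    and "card (succs (ApE V E p) p) \<ge> 2"
  shows "trivial_scc (Vp V E p) (ApE V E p) {p}
       \<and> scc (Vp V E p) (ApE V E p) (Vp V E p - {p})
       \<and> is_cycle (Vp V E p - {p}) (induced (ApE V E p) (Vp V E p - {p}))"
proof -
  have "Suc 1 \<le> card (succs (ApE V E p) p)" using assms(3) by simp
  then obtain a B where "succs (ApE V E p) p = insert a B" "a \<notin> B" "1 \<le> card B"
    by (auto simp: card_le_Suc_iff)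
  moreover then obtain b where "b \<in> B" by fastforce
  ultimately have "a \<in> succs (ApE V E p) p" "b \<in> succs (ApE V E p) p" "a \<noteq> b" by auto
  then interpret interval_fork E "Vp V E p" p a b
    by unfold_locales (auto simp: succs_def ApE_eq_interval_graph Vp_eq_unavoidable)
  show ?thesis using trivial_scc_p scc_rest is_cycle_rest by (simp add: ApE_eq_interval_graph)
qed

end
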